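(* Let $\alpha,\beta\in\mathbb{C}$ with $\Re(\alpha)>-1$ and $\Re(\beta)>-1$, and let $t\in\mathbb{C}$. Then for all $z\in\mathbb{C}$ with $|z|<1$, $$\frac{\partial }{\partial z} {\rm B}_{n}^{(\alpha ,\beta )} (z,1)-\frac{t}{1+\alpha}\, {\rm B}_{n}^{(1+\alpha ,\beta )} (z,1)-\frac{t}{1+\beta}\, {\rm B}_{n}^{(\alpha ,1+\beta )} (z,1)=0 .$$
   Context: For $\lambda\in\mathbb{C}$ and an integer $m\ge 0$, $(\lambda)_m$ denotes the Pochhammer symbol: $(\lambda)_0=1$ and $(\lambda)_m=\lambda(\lambda+1)\cdots(\lambda+m-1)$ for $m\ge1$. For a fixed parameter $t\in\mathbb{C}$ and $\alpha,\beta\in\mathbb{C}$ with $\Re(\alpha)>-1$, $\Re(\beta)>-1$, define $${\rm B}_{n}^{(\alpha ,\beta )} (z,1)=\left[\sum _{m=0}^{\infty } \frac{\tfrac{1}{2} \left(z-1 \right)^{m} t^{m}}{m!\,(1+\alpha)_{m} } \right]\left[\sum _{m=0}^{\infty }\frac{\tfrac{1}{2} \left(z+1 \right)^{m} t^{m}}{m!\,(1+\beta)_{m} } \right]$$ (the index $n$ is nominal; the right-hand side does not depend on it). ${\rm B}_{n}^{(1+\alpha ,\beta)}(z,1)$ and ${\rm B}_{n}^{(\alpha ,1+\beta)}(z,1)$ denote the same function with $\alpha$ replaced by $1+\alpha$, respectively $\beta$ replaced by $1+\beta$. *)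

theory Defs
  imports "HOL-Analysis.Analysis"
begin

text \<open>The function B_n^{(alpha,beta)}(z,1) for fixed parameter t. The index n is
nominal (the right-hand side does not depend on it), so it is omitted.\<close>
definition Bfun :: "complex \<Rightarrow> complex \<Rightarrow> complex \<Rightarrow> complex \<Rightarrow> complex" where
  "Bfun \<alpha> \<beta> t z =
     (\<Sum>m. (1/2) * (z - 1) ^ m * t ^ m / (fact m * pochhammer (1 + \<alpha>) m)) *
     (\<Sum>m. (1/2) * (z + 1) ^ m * t ^ m / (fact m * pochhammer (1 + \<beta>) m))"

end

theory Submission
  imports Defs
begin

text \<open>Each factor of B is, up to the factor 1/2, the hypergeometric function
0F1(;c;x) = \<Sum> x^m / (m! (c)_m) at c = 1 + \<alpha> and x = t (z - 1) (resp. c = 1 + \<beta>,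
x = t (z + 1)). This power series is entire by the ratio test, and termwise
differentiation gives d/dx 0F1(;c;x) = 0F1(;c+1;x) / c. The chain and product rules then
yield the identity for every z.\<close>

definition hyp0F1_coeff :: "'a::field_char_0 \<Rightarrow> nat \<Rightarrow> 'a" where
  "hyp0F1_coeff c m = inverse (fact m * pochhammer c m)"

definition hyp0F1 :: "'a::{real_normed_field,banach} \<Rightarrow> 'a \<Rightarrow> 'a" where
  "hyp0F1 c x = (\<Sum>m. hyp0F1_coeff c m * x ^ m)"

lemma hyp0F1_coeff_Suc:
  "hyp0F1_coeff c (Suc m) = hyp0F1_coeff c m / (of_nat (Suc m) * (c + of_nat m))"
  by (simp add: hyp0F1_coeff_def pochhammer_rec' fact_Suc divide_inverse
      inverse_mult_distrib mult_ac del: of_nat_Suc)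

lemma diffs_hyp0F1_coeff: "diffs (hyp0F1_coeff c) m = hyp0F1_coeff (c + 1) m / c"
proof -
  have "(of_nat (Suc m) :: 'a) \<noteq> 0"
    by (simp del: of_nat_Suc)
  then show ?thesis
    by (simp add: diffs_def hyp0F1_coeff_def pochhammer_rec fact_Suc divide_inverse
        inverse_mult_distrib mult_ac del: of_nat_Suc)
qed

lemma summable_hyp0F1:
  fixes c x :: "'a::{real_normed_field,banach}"
  shows "summable (\<lambda>m. hyp0F1_coeff c m * x ^ m)"
proof (rule summable_ratio_test)
  define N where "N = nat \<lceil>2 * norm x + norm c\<rceil> + 1"
  fix m
  assume "m \<ge> N"
  then have "2 * norm x + 1 \<le> real m - norm c"
    unfolding N_def by linarith
  also have "\<dots> \<le> norm (c + of_nat m)"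
    using norm_triangle_ineq2[of "of_nat m" "-c"] by (simp add: add.commute)
  also have "\<dots> \<le> real (Suc m) * norm (c + of_nat m)"
    by (simp add: mult_le_cancel_right1)
  finally have denom: "2 * norm x \<le> norm (of_nat (Suc m) * (c + of_nat m) :: 'a)"
    by (simp add: norm_mult del: of_nat_Suc)
  have "norm (hyp0F1_coeff c (Suc m) * x ^ Suc m)
      = norm (hyp0F1_coeff c m * x ^ m) * (norm x / norm (of_nat (Suc m) * (c + of_nat m) :: 'a))"
    by (simp add: hyp0F1_coeff_Suc norm_mult norm_divide mult_ac del: of_nat_Suc)
  also have "\<dots> \<le> norm (hyp0F1_coeff c m * x ^ m) * (1 / 2)"
    using denom by (intro mult_left_mono) (auto simp: divide_le_eq)
  finally show "norm (hyp0F1_coeff c (Suc m) * x ^ Suc m) \<le> 1 / 2 * norm (hyp0F1_coeff c m * x ^ m)"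
    by (simp add: mult.commute)
qed simp

lemma hyp0F1_has_field_derivative:
  "(hyp0F1 c has_field_derivative hyp0F1 (c + 1) x / c) (at x)"
proof -
  have "(hyp0F1 c has_field_derivative (\<Sum>m. diffs (hyp0F1_coeff c) m * x ^ m)) (at x)"
    unfolding hyp0F1_def[abs_def]
    by (rule termdiffs_strong_converges_everywhere) (rule summable_hyp0F1)
  also have "(\<Sum>m. diffs (hyp0F1_coeff c) m * x ^ m) = hyp0F1 (c + 1) x / c"
    unfolding diffs_hyp0F1_coeff hyp0F1_def times_divide_eq_left
    by (rule suminf_divide[OF summable_hyp0F1])
  finally show ?thesis .
qed

lemma Bfun_eq_hyp0F1:
  "Bfun a b t z = hyp0F1 (1 + a) (t * (z - 1)) * hyp0F1 (1 + b) (t * (z + 1)) / 4"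
proof -
  have factor: "(\<Sum>m. (1/2) * y ^ m * t ^ m / (fact m * pochhammer (1 + c) m))
      = hyp0F1 (1 + c) (t * y) / 2" for c y :: complex
  proof -
    have "(\<lambda>m. (1/2) * y ^ m * t ^ m / (fact m * pochhammer (1 + c) m))
        = (\<lambda>m. hyp0F1_coeff (1 + c) m * (t * y) ^ m / 2)"
      by (simp add: hyp0F1_coeff_def power_mult_distrib field_simps)
    then show ?thesis
      unfolding hyp0F1_def by (simp add: suminf_divide[OF summable_hyp0F1])
  qed
  show ?thesis
    unfolding Bfun_def factor by simp
qed

lemma Bfun_has_field_derivative:
  "((\<lambda>w. Bfun a b t w) has_field_derivative
     t / (1 + a) * Bfun (1 + a) b t z + t / (1 + b) * Bfun a (1 + b) t z) (at z)"
proof -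
  have "((\<lambda>w. hyp0F1 (1 + a) (t * (w - 1)) * hyp0F1 (1 + b) (t * (w + 1)) / 4)
      has_field_derivative
        (hyp0F1 (1 + a + 1) (t * (z - 1)) / (1 + a) * t * hyp0F1 (1 + b) (t * (z + 1))
         + hyp0F1 (1 + a) (t * (z - 1)) * (hyp0F1 (1 + b + 1) (t * (z + 1)) / (1 + b) * t)) / 4)
      (at z)"
    by (auto intro!: derivative_eq_intros DERIV_chain2[OF hyp0F1_has_field_derivative])
      (simp_all add: mult_ac)
  then show ?thesis
    unfolding Bfun_eq_hyp0F1 by (rule DERIV_cong) (simp add: add_divide_distrib mult_ac)
qed

theorem mainTheorem5:
  fixes \<alpha> \<beta> t z :: complex
  assumes "Re \<alpha> > -1" and "Re \<beta> > -1" and "norm z < 1"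
  shows "(\<lambda>w. Bfun \<alpha> \<beta> t w) field_differentiable (at z) \<and>
         deriv (\<lambda>w. Bfun \<alpha> \<beta> t w) z - t / (1 + \<alpha>) * Bfun (1 + \<alpha>) \<beta> t z
           - t / (1 + \<beta>) * Bfun \<alpha> (1 + \<beta>) t z = 0"
  using Bfun_has_field_derivative[of \<alpha> \<beta> t z]
  by (auto simp: field_differentiable_def DERIV_imp_deriv)

end
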